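(* Let $G$ be a graph with a vertex $u$ whose degree $d_u$ is odd. Then $\uparrow^{2}G$ has Laplacian perfect state transfer between $(0,u)$ and $(1,u)$ if and only if $\sigma_u(G)$ consists of even integers.
   Context: All graphs are simple, undirected and unweighted. $\sigma_u(G)$ is the Laplacian eigenvalue support of $u$: the set of distinct eigenvalues $\lambda$ of the Laplacian $L=D-A$ of $G$ with $E_\lambda\mathbf{e}_u\neq\mathbf{0}$, $E_\lambda$ the orthogonal projection onto the $\lambda$-eigenspace. The blow-up $\uparrow^{2}G$ has vertex set $\mathbb{Z}_2\times V(G)$, with $(l,u)\sim(m,v)$ iff $u\sim v$ in $G$. A graph with Laplacian $L$ has Laplacian perfect state transfer between $a,b$ if $\exp(i\tau L)\mathbf{e}_a=\gamma\mathbf{e}_b$ for some $\tau>0$, $\gamma\in\mathbb{C}$. *)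

theory Defs
  imports "HOL-Analysis.Analysis" "HOL-Library.Numeral_Type"
begin

definition simple_graph :: "('a::finite \<Rightarrow> 'a \<Rightarrow> bool) \<Rightarrow> bool" where
  "simple_graph E \<longleftrightarrow> (\<forall>u v. E u v = E v u) \<and> (\<forall>u. \<not> E u u)"

definition degree :: "('a::finite \<Rightarrow> 'a \<Rightarrow> bool) \<Rightarrow> 'a \<Rightarrow> nat" where
  "degree E u = card {v. E u v}"

definition laplacian :: "('a::finite \<Rightarrow> 'a \<Rightarrow> bool) \<Rightarrow> real^'a^'a" where
  "laplacian E = (\<chi> u v. (if u = v then real (degree E u) else 0) - (if E u v then 1 else 0))"

definition lap_eigenspace :: "real^'a^'a \<Rightarrow> real \<Rightarrow> (real^'a) set" where
  "lap_eigenspace L lam = {v. L *v v = lam *\<^sub>R v}"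

definition orth_proj :: "(real^'a) set \<Rightarrow> real^'a \<Rightarrow> real^'a" where
  "orth_proj S x = (THE p. p \<in> S \<and> (\<forall>w\<in>S. (x - p) \<bullet> w = 0))"

definition std_basis :: "'a::finite \<Rightarrow> real^'a" where
  "std_basis u = axis u 1"

definition eig_support :: "('a::finite \<Rightarrow> 'a \<Rightarrow> bool) \<Rightarrow> 'a \<Rightarrow> real set" where
  "eig_support E u = {lam. orth_proj (lap_eigenspace (laplacian E) lam) (std_basis u) \<noteq> 0}"

definition blowup2 :: "('a \<Rightarrow> 'a \<Rightarrow> bool) \<Rightarrow> (2 \<times> 'a \<Rightarrow> 2 \<times> 'a \<Rightarrow> bool)" where
  "blowup2 E = (\<lambda>(l, u) (m, v). E u v)"

definition cmat_exp_apply :: "complex^'n^'n \<Rightarrow> complex^'n \<Rightarrow> complex^'n" where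
  "cmat_exp_apply M x = (\<Sum>k. (1 / of_nat (fact k)) *s (((\<lambda>y. M *v y) ^^ k) x))"

definition cmat_of :: "real^'n^'m \<Rightarrow> complex^'n^'m" where
  "cmat_of A = (\<chi> i j. complex_of_real (A $ i $ j))"

definition cbasis :: "'a::finite \<Rightarrow> complex^'a" where
  "cbasis u = axis u 1"

definition lap_pst :: "('a::finite \<Rightarrow> 'a \<Rightarrow> bool) \<Rightarrow> 'a \<Rightarrow> 'a \<Rightarrow> bool" where
  "lap_pst E a b \<longleftrightarrow> (\<exists>\<tau>::real. \<tau> > 0 \<and> (\<exists>\<gamma>::complex.
      cmat_exp_apply (\<chi> i j. \<i> * complex_of_real \<tau> * (cmat_of (laplacian E) $ i $ j)) (cbasis a) = \<gamma> *s cbasis b))"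

end

theory Submission
  imports Defs "HOL-Number_Theory.Cong"
begin

(*
  The vertices (0,u) and (1,u) of the blow-up are twins. Write e_(0,u) as half the lift of e_u
  plus half of e_(0,u) - e_(1,u). The lift of an eigenvector of L for lam is an eigenvector of the
  blow-up Laplacian for 2 lam, and e_(0,u) - e_(1,u) is one for 2 d_u. Hence exp(i t L') e_(0,u)
  equals gamma e_(1,u) iff exp(2 i t d_u) = -gamma and exp(2 i t lam) = gamma for every lam in the
  eigenvalue support of u; since 0 always lies in the support, gamma = 1.

  For odd d_u and a support of even integers, t = pi/2 works. Conversely the two phase conditions
  give lam (2j + 1) = 2 d_u n, so lam is rational, hence an integer (a rational eigenvalue of an
  integer matrix), hence even.
*)

section \<open>Rational eigenvalues of integer matrices\<close>

lemma det_map_matrix_of_int: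
  fixes N :: "int^'n^'n"
  shows "det (map_matrix of_int N :: 'a::comm_ring_1^'n^'n) = of_int (det N)"
  unfolding det_def by (simp add: of_int_sum of_int_prod)

lemma det_cong:
  fixes M N :: "int^'n^'n"
  assumes "\<And>i j. [M$i$j = N$i$j] (mod q)"
  shows "[det M = det N] (mod q)"
  unfolding det_def by (intro cong_sum cong_mult cong_refl cong_prod assms)

lemma det_mat: "det (mat c :: 'a::comm_ring_1^'n^'n) = c ^ CARD('n)"
  by (simp add: det_diagonal mat_def)

lemma int_matrix_rational_eigenvalue_is_int:
  fixes K :: "int^'n^'n" and v :: "real^'n"
  assumes eig: "map_matrix of_int K *v v = mu *\<^sub>R v" and "v \<noteq> 0" and "mu \<in> \<rat>"
  shows "mu \<in> \<int>"
proof -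
  \<comment> \<open>For \<open>mu = c / q\<close> in lowest terms, \<open>det (q K - c I)\<close> vanishes and is
     congruent to \<open>(- c) ^ n\<close> modulo \<open>q\<close>, so \<open>q\<close> divides a power of \<open>c\<close>.\<close>
  obtain c q where "q > 0" "coprime c q" and mu: "mu = of_int c / of_int q"
    using Rats_cases'[OF \<open>mu \<in> \<rat>\<close>] .
  define N :: "int^'n^'n" where "N = (\<chi> i j. q * K$i$j) - mat c"
  have "map_matrix of_int N *v v = of_int q *\<^sub>R (map_matrix of_int K *v v) - of_int c *\<^sub>R v"
    by (simp add: N_def vec_eq_iff matrix_vector_mult_def mat_def of_int_diff left_diff_distrib
        sum_subtractf sum_distrib_left mult.assoc if_distrib[of real_of_int]
        if_distrib[of "\<lambda>x. x * _"] cong: if_cong)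
  also have "\<dots> = 0"
    using \<open>q > 0\<close> by (simp add: eig mu)
  finally have "\<not> inj ((*v) (map_matrix of_int N :: real^'n^'n))"
    using \<open>v \<noteq> 0\<close> by (metis injD matrix_vector_mult_0_right)
  then have "det (map_matrix of_int N :: real^'n^'n) = 0"
    using inj_matrix_vector_mult invertible_det_nz by blast
  then have "det N = 0"
    by (simp add: det_map_matrix_of_int)
  moreover have "[det N = det (mat (- c) :: int^'n^'n)] (mod q)"
    by (rule det_cong) (simp add: N_def mat_def cong_iff_dvd_diff)
  ultimately have "q dvd (- c) ^ CARD('n)"
    by (metis det_mat cong_0_iff cong_sym)
  moreover have "coprime q ((- c) ^ CARD('n))"
    using \<open>coprime c q\<close> by (simp add: coprime_commute)
  ultimately have "is_unit q"
    by (meson coprime_common_divisor dvd_refl)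
  then have "q = 1"
    using \<open>q > 0\<close> by simp
  then show ?thesis
    by (simp add: mu)
qed

section \<open>Spectral decomposition of real symmetric matrices\<close>

lemma symmetric_matrix_inner:
  fixes A :: "real^'n^'n"
  assumes "transpose A = A"
  shows "(A *v x) \<bullet> y = x \<bullet> (A *v y)"
  by (metis assms dot_lmul_matrix transpose_matrix_vector)

lemma symmetric_matrix_eigenvectors_orthogonal:
  fixes A :: "real^'n^'n"
  assumes "transpose A = A" and "A *v v = a *\<^sub>R v" and "A *v w = b *\<^sub>R w" and "a \<noteq> b"
  shows "v \<bullet> w = 0"
proof -
  have "a * (v \<bullet> w) = b * (v \<bullet> w)"
    using symmetric_matrix_inner[OF assms(1), of v w] assms(2,3) by simp
  then show ?thesis
    using assms(4) by simp
qed

lemma linear_coeff_zero_if_quadratic_nonpos: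
  fixes a b :: real
  assumes "\<And>t. t * a + t\<^sup>2 * b \<le> 0"
  shows "a = 0"
proof (rule ccontr)
  assume "a \<noteq> 0"
  define c where "c = \<bar>b\<bar> + 1"
  have "c > 0" "c + b > 0"
    by (auto simp: c_def)
  have "(a / c) * a + (a / c)\<^sup>2 * b = a\<^sup>2 * (c + b) / c\<^sup>2"
    using \<open>c > 0\<close> by (simp add: field_simps power2_eq_square)
  also have "\<dots> > 0"
    using \<open>a \<noteq> 0\<close> \<open>c > 0\<close> \<open>c + b > 0\<close> by simp
  finally show False
    using assms[of "a / c"] by linarith
qed

lemma rayleigh_quotient_attains_max:
  fixes A :: "real^'n^'n"
  assumes "subspace W" and "W \<noteq> {0}"
  obtains x0 where "x0 \<in> W" "norm x0 = 1"
    "\<And>y. y \<in> W \<Longrightarrow> y \<bullet> (A *v y) \<le> (x0 \<bullet> (A *v x0)) * (y \<bullet> y)"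
proof -
  define K where "K = W \<inter> sphere 0 1"
  obtain z where "z \<in> W" "z \<noteq> 0"
    using assms subspace_0 by blast
  then have "(1 / norm z) *\<^sub>R z \<in> K"
    using \<open>subspace W\<close> by (auto simp: K_def subspace_scale)
  moreover have "compact K"
    unfolding K_def by (intro closed_Int_compact closed_subspace assms compact_sphere)
  moreover have "continuous_on K (\<lambda>x. x \<bullet> (A *v x))"
    by (intro continuous_on_inner continuous_on_id linear_continuous_on matrix_vector_mul_bounded_linear)
  ultimately obtain x0 where x0: "x0 \<in> K"
    and K_max: "\<And>y. y \<in> K \<Longrightarrow> y \<bullet> (A *v y) \<le> x0 \<bullet> (A *v x0)"
    using continuous_attains_sup[of K "\<lambda>x. x \<bullet> (A *v x)"] by blast
  have "y \<bullet> (A *v y) \<le> (x0 \<bullet> (A *v x0)) * (y \<bullet> y)" if "y \<in> W" for y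
  proof (cases "y = 0")
    case False
    define y' where "y' = (1 / norm y) *\<^sub>R y"
    have "y' \<in> K"
      using False that \<open>subspace W\<close> by (auto simp: K_def y'_def subspace_scale)
    moreover have "y' \<bullet> (A *v y') = (y \<bullet> (A *v y)) / (y \<bullet> y)"
      by (simp add: y'_def matrix_vector_mult_scaleR dot_square_norm power2_eq_square)
    ultimately have "(y \<bullet> (A *v y)) / (y \<bullet> y) \<le> x0 \<bullet> (A *v x0)"
      using K_max by metis
    moreover have "y \<bullet> y > 0"
      using False by simp
    ultimately show ?thesis
      by (simp add: divide_le_eq mult.commute)
  qed simp
  with x0 that show ?thesis
    by (auto simp: K_def)
qed

lemma symmetric_matrix_rayleigh_max_is_eigenvector:
  fixes A :: "real^'n^'n"
  assumes sym: "transpose A = A" and W: "subspace W" and inv: "\<And>w. w \<in> W \<Longrightarrow> A *v w \<in> W"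
    and "x0 \<in> W" and rayleigh_le: "\<And>y. y \<in> W \<Longrightarrow> y \<bullet> (A *v y) \<le> m * (y \<bullet> y)"
    and m: "m = x0 \<bullet> (A *v x0)" and "x0 \<bullet> x0 = 1"
  shows "A *v x0 = m *\<^sub>R x0"
proof -
  define r where "r = A *v x0 - m *\<^sub>R x0"
  have "2 * (r \<bullet> y) = 0" if "y \<in> W" for y
  proof (rule linear_coeff_zero_if_quadratic_nonpos[where b = "y \<bullet> (A *v y) - m * (y \<bullet> y)"])
    fix t :: real
    have "x0 + t *\<^sub>R y \<in> W"
      using W \<open>x0 \<in> W\<close> that by (simp add: subspace_add subspace_scale)
    then have "(x0 + t *\<^sub>R y) \<bullet> (A *v (x0 + t *\<^sub>R y)) \<le> m * ((x0 + t *\<^sub>R y) \<bullet> (x0 + t *\<^sub>R y))"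
      by (rule rayleigh_le)
    moreover have "x0 \<bullet> (A *v y) = (A *v x0) \<bullet> y"
      using symmetric_matrix_inner[OF sym] by simp
    ultimately show "t * (2 * (r \<bullet> y)) + t\<^sup>2 * (y \<bullet> (A *v y) - m * (y \<bullet> y)) \<le> 0"
      unfolding r_def m using \<open>x0 \<bullet> x0 = 1\<close>
      by (simp add: matrix_vector_right_distrib matrix_vector_mult_scaleR inner_add_left
          inner_add_right inner_diff_left inner_commute[of y x0] inner_commute[of y "A *v x0"]
          power2_eq_square algebra_simps)
  qed
  moreover have "r \<in> W"
    unfolding r_def using W \<open>x0 \<in> W\<close> inv by (simp add: subspace_diff subspace_scale)
  ultimately show ?thesis
    unfolding r_def by (metis inner_eq_zero_iff mult_eq_0_iff right_minus_eq zero_neq_numeral)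
qed

lemma symmetric_matrix_eigenvectors_span:
  fixes A :: "real^'n^'n"
  assumes sym: "transpose A = A"
  shows "span {v. \<exists>l. A *v v = l *\<^sub>R v} = UNIV"
proof (rule ccontr)
  \<comment> \<open>The orthogonal complement \<open>W\<close> of the span \<open>S\<close> of all eigenvectors is
     \<open>A\<close>-invariant, so if it were nonzero the maximiser of the Rayleigh quotient on \<open>W\<close>
     would be an eigenvector in \<open>W\<close>.\<close>
  define S where "S = span {v. \<exists>l. A *v v = l *\<^sub>R v}"
  define W where "W = {z. \<forall>w\<in>S. z \<bullet> w = 0}"
  assume "span {v. \<exists>l. A *v v = l *\<^sub>R v} \<noteq> UNIV"
  then have "span S \<noteq> UNIV"
    by (simp add: S_def span_span)
  then have "dim S \<noteq> DIM(real^'n)"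
    using dim_eq_full[of S] by blast
  then have "dim S < DIM(real^'n)"
    using dim_subset_UNIV[of S] by linarith
  then obtain z where "z \<noteq> 0" "\<And>w. w \<in> span S \<Longrightarrow> orthogonal z w"
    using orthogonal_to_subspace_exists by blast
  then have "z \<in> W" "z \<noteq> 0"
    by (auto simp: W_def orthogonal_def span_base)
  have "subspace W"
    unfolding subspace_def W_def by (auto simp: inner_add_left)
  have AS: "A *v w \<in> S" if "w \<in> S" for w
    using that unfolding S_def
  proof (induction rule: span_induct)
    case base
    show ?case
      unfolding subspace_def
      by (auto simp: matrix_vector_right_distrib matrix_vector_mult_scaleR intro: span_add span_mul span_zero)
  next
    case (step v)
    then obtain l where "A *v v = l *\<^sub>R v" by auto
    then show ?case by (simp add: span_base span_mul step)
  qed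
  have AW: "A *v w \<in> W" if "w \<in> W" for w
    using that AS symmetric_matrix_inner[OF sym] by (auto simp: W_def)
  obtain x0 where "x0 \<in> W" "norm x0 = 1"
    and rayleigh_le: "\<And>y. y \<in> W \<Longrightarrow> y \<bullet> (A *v y) \<le> (x0 \<bullet> (A *v x0)) * (y \<bullet> y)"
    using rayleigh_quotient_attains_max[OF \<open>subspace W\<close>, of A] \<open>z \<in> W\<close> \<open>z \<noteq> 0\<close> by blast
  have "x0 \<bullet> x0 = 1"
    using \<open>norm x0 = 1\<close> by (simp add: dot_square_norm)
  then have "A *v x0 = (x0 \<bullet> (A *v x0)) *\<^sub>R x0"
    by (intro symmetric_matrix_rayleigh_max_is_eigenvector[OF sym \<open>subspace W\<close> AW
        \<open>x0 \<in> W\<close> rayleigh_le]) auto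
  then have "x0 \<in> S"
    unfolding S_def by (blast intro: span_base)
  then have "x0 \<bullet> x0 = 0"
    using \<open>x0 \<in> W\<close> by (auto simp: W_def)
  with \<open>x0 \<bullet> x0 = 1\<close> show False
    by simp
qed

lemma symmetric_matrix_eigen_decomposition:
  fixes A :: "real^'n^'n"
  assumes "transpose A = A"
  obtains Lam y where "finite Lam" and "x = (\<Sum>l\<in>Lam. y l)"
    and "\<And>l. l \<in> Lam \<Longrightarrow> A *v y l = l *\<^sub>R y l"
proof -
  define Ev where "Ev = {v. \<exists>l. A *v v = l *\<^sub>R v}"
  obtain T c where "finite T" "T \<subseteq> Ev" and x: "x = (\<Sum>v\<in>T. c v *\<^sub>R v)"
    using symmetric_matrix_eigenvectors_span[OF assms] unfolding span_explicit Ev_def by blast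
  define ev where "ev v = (SOME l. A *v v = l *\<^sub>R v)" for v
  have ev: "A *v v = ev v *\<^sub>R v" if "v \<in> T" for v
    using \<open>T \<subseteq> Ev\<close> that unfolding ev_def Ev_def by (auto intro: someI_ex)
  define y where "y l = (\<Sum>v | v \<in> T \<and> ev v = l. c v *\<^sub>R v)" for l
  show thesis
  proof
    show "finite (ev ` T)"
      using \<open>finite T\<close> by simp
    show "x = (\<Sum>l\<in>ev ` T. y l)"
      unfolding x y_def by (rule sum.image_gen[OF \<open>finite T\<close>])
    show "A *v y l = l *\<^sub>R y l" for l
      unfolding y_def
      by (simp add: linear_sum[OF matrix_vector_mul_linear] matrix_vector_mult_scaleR ev
          scaleR_sum_right mult.commute)
  qed
qed

lemma orth_proj_eqI:
  fixes S :: "(real^'n) set"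
  assumes "subspace S" and "p \<in> S" and "\<And>w. w \<in> S \<Longrightarrow> (x - p) \<bullet> w = 0"
  shows "orth_proj S x = p"
  unfolding orth_proj_def
proof (rule the_equality)
  fix p' assume p': "p' \<in> S \<and> (\<forall>w\<in>S. (x - p') \<bullet> w = 0)"
  then have "p - p' \<in> S"
    using assms(1,2) subspace_diff by blast
  then have "(p - p') \<bullet> (p - p') = (x - p') \<bullet> (p - p') - (x - p) \<bullet> (p - p')"
    by (simp add: inner_diff_left)
  also have "\<dots> = 0"
    using p' assms(3) \<open>p - p' \<in> S\<close> by simp
  finally show "p' = p"
    by simp
qed (use assms in auto)

lemma orth_proj_mem_orthogonal:
  fixes S :: "(real^'n) set"
  assumes "subspace S"
  shows "orth_proj S x \<in> S" and "\<And>w. w \<in> S \<Longrightarrow> (x - orth_proj S x) \<bullet> w = 0"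
proof -
  obtain p z where "p \<in> span S" and z: "\<And>w. w \<in> span S \<Longrightarrow> orthogonal z w" and "x = p + z"
    using orthogonal_subspace_decomp_exists by blast
  moreover have "span S = S"
    using assms by (simp add: span_eq_iff)
  ultimately have "p \<in> S" "\<And>w. w \<in> S \<Longrightarrow> (x - p) \<bullet> w = 0"
    by (auto simp: orthogonal_def)
  moreover from this have "orth_proj S x = p"
    by (rule orth_proj_eqI[OF assms])
  ultimately show "orth_proj S x \<in> S" "\<And>w. w \<in> S \<Longrightarrow> (x - orth_proj S x) \<bullet> w = 0"
    by auto
qed

abbreviation eigenproj :: "real^'n^'n \<Rightarrow> real \<Rightarrow> real^'n \<Rightarrow> real^'n" where
  "eigenproj A lam x \<equiv> orth_proj (lap_eigenspace A lam) x"

lemma subspace_lap_eigenspace: "subspace (lap_eigenspace A lam)"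
  unfolding subspace_def lap_eigenspace_def
  by (simp add: matrix_vector_right_distrib matrix_vector_mult_scaleR scaleR_add_right)

lemma eigenproj_eigenvector: "A *v eigenproj A lam x = lam *\<^sub>R eigenproj A lam x"
  using orth_proj_mem_orthogonal(1)[OF subspace_lap_eigenspace] by (simp add: lap_eigenspace_def)

lemma eigenproj_orthogonal:
  assumes "A *v w = lam *\<^sub>R w"
  shows "(x - eigenproj A lam x) \<bullet> w = 0"
  using orth_proj_mem_orthogonal(2)[OF subspace_lap_eigenspace] assms by (simp add: lap_eigenspace_def)

lemma eigenproj_inner_self: "eigenproj A lam x \<bullet> x = eigenproj A lam x \<bullet> eigenproj A lam x"
  using eigenproj_orthogonal[where x = x, OF eigenproj_eigenvector[of A lam x]]
  by (simp add: inner_diff_left inner_diff_right inner_commute)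

lemma symmetric_matrix_eigenproj_decomposition:
  fixes A :: "real^'n^'n"
  assumes sym: "transpose A = A"
  shows "finite {lam. eigenproj A lam x \<noteq> 0}"
    and "x = (\<Sum>lam | eigenproj A lam x \<noteq> 0. eigenproj A lam x)"
proof -
  obtain Lam y where "finite Lam" and x: "x = (\<Sum>l\<in>Lam. y l)"
    and eig: "\<And>l. l \<in> Lam \<Longrightarrow> A *v y l = l *\<^sub>R y l"
    using symmetric_matrix_eigen_decomposition[OF sym] by blast
  have proj: "eigenproj A m x = (if m \<in> Lam then y m else 0)" for m
  proof (rule orth_proj_eqI[OF subspace_lap_eigenspace])
    show "(if m \<in> Lam then y m else 0) \<in> lap_eigenspace A m"
      using eig by (simp add: lap_eigenspace_def)
    fix w assume "w \<in> lap_eigenspace A m"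
    then have "y l \<bullet> w = 0" if "l \<in> Lam - {m}" for l
      using symmetric_matrix_eigenvectors_orthogonal[OF sym eig] that by (auto simp: lap_eigenspace_def)
    moreover have "x - (if m \<in> Lam then y m else 0) = (\<Sum>l\<in>Lam - {m}. y l)"
      using \<open>finite Lam\<close> by (simp add: x sum_diff1)
    ultimately show "(x - (if m \<in> Lam then y m else 0)) \<bullet> w = 0"
      by (simp add: inner_sum_left)
  qed
  then have "{lam. eigenproj A lam x \<noteq> 0} \<subseteq> Lam"
    by auto
  then show "finite {lam. eigenproj A lam x \<noteq> 0}"
    using \<open>finite Lam\<close> by (rule finite_subset)
  have "x = (\<Sum>l\<in>Lam. eigenproj A l x)"
    unfolding proj by (simp add: x)
  also have "\<dots> = (\<Sum>lam | eigenproj A lam x \<noteq> 0. eigenproj A lam x)"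
    using \<open>finite Lam\<close> \<open>{lam. eigenproj A lam x \<noteq> 0} \<subseteq> Lam\<close> by (intro sum.mono_neutral_right) auto
  finally show "x = (\<Sum>lam | eigenproj A lam x \<noteq> 0. eigenproj A lam x)" .
qed

section \<open>The exponential series on eigenvectors\<close>

lemma sums_vector_scalar_mult:
  fixes f :: "nat \<Rightarrow> 'a::real_normed_field" and w :: "'a^'n"
  assumes "f sums s"
  shows "(\<lambda>k. f k *s w) sums (s *s w)"
  unfolding sums_def
proof (rule vec_tendstoI)
  fix i
  have "(\<lambda>k. f k * w $ i) sums (s * w $ i)"
    using assms by (rule sums_mult2)
  then show "((\<lambda>n. (\<Sum>k<n. f k *s w) $ i) \<longlongrightarrow> (s *s w) $ i) sequentially"
    by (simp add: sums_def)
qed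

lemma funpow_matrix_vector_mult_add:
  fixes M :: "'a::semiring_1^'n^'n"
  shows "((*v) M ^^ k) (a + b) = ((*v) M ^^ k) a + ((*v) M ^^ k) b"
  by (induction k) (auto simp: matrix_vector_right_distrib)

lemma funpow_matrix_vector_mult_sum:
  fixes M :: "'a::field^'n^'n"
  shows "((*v) M ^^ k) (\<Sum>j\<in>J. w j) = (\<Sum>j\<in>J. ((*v) M ^^ k) (w j))"
  by (induction k) (simp_all add: vec.sum)

lemma funpow_matrix_vector_mult_eigen:
  fixes M :: "'a::field^'n^'n"
  assumes "M *v w = c *s w"
  shows "((*v) M ^^ k) w = c ^ k *s w"
  by (induction k) (auto simp: vector_scalar_commute assms vector_smult_assoc mult.commute)

lemma exp_series_eigen_sums:
  fixes M :: "complex^'n^'n"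
  assumes "M *v w = c *s w"
  shows "(\<lambda>k. (1 / of_nat (fact k)) *s ((*v) M ^^ k) w) sums (exp c *s w)"
proof -
  have "(\<lambda>k. (c ^ k /\<^sub>R fact k) *s w) sums (exp c *s w)"
    by (rule sums_vector_scalar_mult[OF exp_converges])
  then show ?thesis
    by (simp add: funpow_matrix_vector_mult_eigen[OF assms] vector_smult_assoc scaleR_conv_of_real
        divide_inverse mult.commute)
qed

lemma cmat_exp_apply_eigen_expansion:
  fixes M :: "complex^'n^'n"
  assumes "finite J" and "\<And>j. j \<in> J \<Longrightarrow> M *v w j = c j *s w j" and "M *v z = c0 *s z"
  shows "cmat_exp_apply M (z + (\<Sum>j\<in>J. w j)) = exp c0 *s z + (\<Sum>j\<in>J. exp (c j) *s w j)"
proof -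
  let ?T = "\<lambda>k x. (1 / of_nat (fact k)) *s ((*v) M ^^ k) x"
  have "(\<lambda>k. ?T k z + (\<Sum>j\<in>J. ?T k (w j))) sums (exp c0 *s z + (\<Sum>j\<in>J. exp (c j) *s w j))"
    by (intro sums_add sums_sum exp_series_eigen_sums assms)
  moreover have "?T k (z + (\<Sum>j\<in>J. w j)) = ?T k z + (\<Sum>j\<in>J. ?T k (w j))" for k
    by (simp add: funpow_matrix_vector_mult_add funpow_matrix_vector_mult_sum vector_add_ldistrib
        sum_cmul)
  ultimately show ?thesis
    unfolding cmat_exp_apply_def by (simp add: sums_iff)
qed

definition cvec :: "real^'n \<Rightarrow> complex^'n" where
  "cvec v = (\<chi> i. complex_of_real (v $ i))"

(* A bilinear (not sesquilinear) pairing, used to read off coefficients against real test vectors. *)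
definition cpair :: "real^'n \<Rightarrow> complex^'n \<Rightarrow> complex" where
  "cpair v z = (\<Sum>i\<in>UNIV. complex_of_real (v $ i) * z $ i)"

lemma cvec_add: "cvec (a + b) = cvec a + cvec b"
  by (simp add: cvec_def vec_eq_iff)

lemma cvec_diff: "cvec (a - b) = cvec a - cvec b"
  by (simp add: cvec_def vec_eq_iff)

lemma cvec_sum: "cvec (\<Sum>j\<in>J. w j) = (\<Sum>j\<in>J. cvec (w j))"
  by (induction J rule: infinite_finite_induct) (auto simp: cvec_add cvec_def vec_eq_iff)

lemma cvec_scaleR: "cvec (c *\<^sub>R a) = complex_of_real c *s cvec a"
  by (simp add: cvec_def vec_eq_iff)

lemma cbasis_eq_cvec: "cbasis p = cvec (std_basis p)"
  by (simp add: cbasis_def std_basis_def cvec_def vec_eq_iff axis_def)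

lemma cmat_of_mult_cvec:
  "(\<chi> i j. \<i> * complex_of_real t * (cmat_of L $ i $ j)) *v cvec w = (\<i> * complex_of_real t) *s cvec (L *v w)"
  by (simp add: cvec_def cmat_of_def vec_eq_iff matrix_vector_mult_def sum_distrib_left mult.assoc)

lemma cmat_of_mult_cvec_eigen:
  assumes "L *v w = r *\<^sub>R w"
  shows "(\<chi> i j. \<i> * complex_of_real t * (cmat_of L $ i $ j)) *v cvec w
        = (\<i> * complex_of_real (t * r)) *s cvec w"
  using cmat_of_mult_cvec[of t L w] by (simp add: assms cvec_scaleR vector_smult_assoc ac_simps)

lemma cpair_cvec: "cpair v (cvec w) = complex_of_real (v \<bullet> w)"
  by (simp add: cpair_def cvec_def inner_vec_def)

lemma cpair_add: "cpair v (y + z) = cpair v y + cpair v z"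
  by (simp add: cpair_def distrib_left sum.distrib)

lemma cpair_smult: "cpair v (c *s z) = c * cpair v z"
  by (simp add: cpair_def sum_distrib_left mult_ac)

lemma cpair_sum: "cpair v (\<Sum>j\<in>J. w j) = (\<Sum>j\<in>J. cpair v (w j))"
  unfolding cpair_def by (simp add: sum_distrib_left) (rule sum.swap)

section \<open>Laplacians of a graph and of its blow-up\<close>

lemma inner_std_basis: "a \<bullet> std_basis p = a $ p"
  by (simp add: std_basis_def inner_axis)

lemma std_basis_component: "std_basis p $ q = (if q = p then 1 else 0)"
  by (simp add: std_basis_def axis_def)

lemma laplacian_symmetric:
  assumes "simple_graph E"
  shows "transpose (laplacian E) = laplacian E"
  using assms unfolding simple_graph_def laplacian_def transpose_def by (auto simp: vec_eq_iff)

lemma laplacian_apply: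
  "(laplacian E *v w) $ i = real (degree E i) * w $ i - (\<Sum>j | E i j. w $ j)"
  unfolding laplacian_def matrix_vector_mult_def
  by (simp add: left_diff_distrib sum_subtractf if_distrib[of "\<lambda>x. x * _"] sum.inter_filter[symmetric]
      cong: if_cong)

lemma laplacian_mult_ones: "laplacian E *v (\<chi> i. 1) = 0"
  by (simp add: vec_eq_iff laplacian_apply degree_def)

lemma laplacian_eq_map_matrix_of_int:
  "laplacian E = map_matrix of_int
     (\<chi> i j. (if i = j then int (degree E i) else 0) - (if E i j then 1 else 0))"
  by (simp add: laplacian_def vec_eq_iff)

lemma eig_support_expansion:
  assumes "simple_graph E"
  shows "finite (eig_support E u)"
    and "std_basis u = (\<Sum>m\<in>eig_support E u. eigenproj (laplacian E) m (std_basis u))"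
  using symmetric_matrix_eigenproj_decomposition[OF laplacian_symmetric[OF assms]]
  unfolding eig_support_def by blast+

lemma zero_in_eig_support: "0 \<in> eig_support E u"
proof -
  let ?P = "eigenproj (laplacian E) 0 (std_basis u)"
  have "(std_basis u - ?P) \<bullet> (\<chi> i. 1) = 0"
    by (rule eigenproj_orthogonal) (simp add: laplacian_mult_ones)
  then have "?P \<bullet> (\<chi> i. 1) = 1"
    by (simp add: inner_diff_left inner_diff_right inner_commute[of _ "\<chi> i. 1"] inner_std_basis)
  then show ?thesis
    by (auto simp: eig_support_def)
qed

(* The library's exhaust_2 names the two elements of type 2 as 1 and 2. *)
lemma exhaust_2_0_1: "(x::2) = 0 \<or> x = 1"
  using exhaust_2[of x] by auto

lemma forall_2_0_1: "(\<forall>i::2. P i) \<longleftrightarrow> P 0 \<and> P 1"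
  by (metis exhaust_2_0_1)

lemma sum_UNIV_2: "(\<Sum>m\<in>(UNIV::2 set). f m) = f 0 + f 1"
proof -
  have UNIV_eq: "(UNIV::2 set) = {0, 1}"
    using exhaust_2_0_1 by auto
  show ?thesis
    unfolding UNIV_eq by simp
qed

lemma sum_UNIV_2_times:
  "(\<Sum>p\<in>(UNIV::(2 \<times> 'b::finite) set). f p) = (\<Sum>y\<in>UNIV. f (0, y) + f (1, y))"
proof -
  have "(\<Sum>p\<in>(UNIV::(2 \<times> 'b) set). f p) = (\<Sum>m\<in>UNIV. \<Sum>y\<in>UNIV. f (m, y))"
    by (simp add: sum.cartesian_product)
  also have "\<dots> = (\<Sum>y\<in>UNIV. f (0, y) + f (1, y))"
    by (simp add: sum_UNIV_2 sum.distrib)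
  finally show ?thesis .
qed

lemma blowup2_neighbours: "{p. blowup2 E (l, x) p} = (UNIV :: 2 set) \<times> {y. E x y}"
  by (auto simp: blowup2_def)

lemma degree_blowup2: "degree (blowup2 E) (l, x) = 2 * degree E x"
  unfolding degree_def blowup2_neighbours by (simp add: card_cartesian_product)

lemma laplacian_blowup2_apply:
  "(laplacian (blowup2 E) *v w) $ (l, x) =
     2 * real (degree E x) * w $ (l, x) - (\<Sum>y | E x y. w $ (0, y) + w $ (1, y))"
proof -
  have "(\<Sum>p | blowup2 E (l, x) p. w $ p) = (\<Sum>m\<in>UNIV. \<Sum>y | E x y. w $ (m, y))"
    unfolding blowup2_neighbours by (simp add: sum.cartesian_product)
  also have "\<dots> = (\<Sum>y | E x y. w $ (0, y) + w $ (1, y))"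
    by (simp add: sum_UNIV_2 sum.distrib)
  finally show ?thesis
    by (simp add: laplacian_apply degree_blowup2)
qed

definition blowup_lift :: "real^'a \<Rightarrow> real^(2 \<times> 'a)" where
  "blowup_lift v = (\<chi> p. v $ snd p)"

lemma linear_blowup_lift: "linear blowup_lift"
  by (simp add: linear_iff blowup_lift_def vec_eq_iff)

lemma laplacian_blowup2_lift:
  "laplacian (blowup2 E) *v blowup_lift v = 2 *\<^sub>R blowup_lift (laplacian E *v v)"
proof -
  have "(laplacian (blowup2 E) *v blowup_lift v) $ (l, x)
      = (2 *\<^sub>R blowup_lift (laplacian E *v v)) $ (l, x)" for l x
    unfolding laplacian_blowup2_apply
    by (simp add: laplacian_apply blowup_lift_def sum_distrib_left algebra_simps)
  then show ?thesis
    by (simp add: vec_eq_iff split_paired_All)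
qed

lemma blowup_lift_std_basis: "blowup_lift (std_basis u) = std_basis (0, u) + std_basis (1, u)"
  by (simp add: vec_eq_iff blowup_lift_def std_basis_def axis_def split_paired_All forall_2_0_1)

lemma blowup_lift_std_basis_expansion:
  assumes "simple_graph E"
  shows "blowup_lift (std_basis u)
    = (\<Sum>m\<in>eig_support E u. blowup_lift (eigenproj (laplacian E) m (std_basis u)))"
  by (subst eig_support_expansion(2)[OF assms]) (simp add: linear_sum[OF linear_blowup_lift])

lemma inner_blowup_lift: "blowup_lift a \<bullet> blowup_lift b = 2 * (a \<bullet> b)"
  by (simp add: inner_vec_def blowup_lift_def sum_UNIV_2_times sum_distrib_left)

definition twin_diff :: "'a::finite \<Rightarrow> real^(2 \<times> 'a)" where
  "twin_diff u = std_basis (0, u) - std_basis (1, u)"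

lemma laplacian_blowup2_twin_diff:
  "laplacian (blowup2 E) *v twin_diff u = (2 * real (degree E u)) *\<^sub>R twin_diff u"
  by (simp add: vec_eq_iff split_paired_All forall_2_0_1 laplacian_blowup2_apply twin_diff_def
      std_basis_def axis_def)

lemma inner_twin_diff_blowup_lift: "twin_diff u \<bullet> blowup_lift a = 0"
  by (simp add: twin_diff_def inner_diff_left inner_commute[of "std_basis _"] inner_std_basis blowup_lift_def)

lemma inner_blowup_lift_twin_diff: "blowup_lift a \<bullet> twin_diff u = 0"
  using inner_twin_diff_blowup_lift by (metis inner_commute)

lemma inner_twin_diff_self: "twin_diff u \<bullet> twin_diff u = 2"
  by (simp add: twin_diff_def inner_diff_right inner_std_basis std_basis_component)

lemma inner_twin_diff_std_basis: "twin_diff u \<bullet> std_basis (1, u) = -1"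
  by (simp add: twin_diff_def inner_std_basis std_basis_component)

section \<open>Perfect state transfer between twins\<close>

abbreviation lap_walk :: "('a::finite \<Rightarrow> 'a \<Rightarrow> bool) \<Rightarrow> real \<Rightarrow> complex^'a \<Rightarrow> complex^'a" where
  "lap_walk E t \<equiv> cmat_exp_apply (\<chi> i j. \<i> * complex_of_real t * (cmat_of (laplacian E) $ i $ j))"

lemma blowup2_lap_walk_expansion:
  fixes E :: "'a::finite \<Rightarrow> 'a \<Rightarrow> bool" and u :: 'a
  assumes "simple_graph E"
  defines "P m \<equiv> eigenproj (laplacian E) m (std_basis u)"
  shows "lap_walk (blowup2 E) t (cbasis (0, u)) =
     exp (\<i> * complex_of_real (t * (2 * real (degree E u)))) *s cvec ((1/2) *\<^sub>R twin_diff u)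
     + (\<Sum>m\<in>eig_support E u. exp (\<i> * complex_of_real (t * (2 * m))) *s cvec ((1/2) *\<^sub>R blowup_lift (P m)))"
proof -
  have "std_basis (0, u) = (1/2) *\<^sub>R twin_diff u + (1/2) *\<^sub>R blowup_lift (std_basis u)"
    by (simp add: twin_diff_def blowup_lift_std_basis algebra_simps)
  also have "blowup_lift (std_basis u) = (\<Sum>m\<in>eig_support E u. blowup_lift (P m))"
    unfolding P_def by (rule blowup_lift_std_basis_expansion[OF assms(1)])
  finally have e0: "cbasis (0, u) = cvec ((1/2) *\<^sub>R twin_diff u)
      + (\<Sum>m\<in>eig_support E u. cvec ((1/2) *\<^sub>R blowup_lift (P m)))"
    by (simp add: cbasis_eq_cvec cvec_add cvec_sum scaleR_sum_right)
  have lift_eig: "laplacian (blowup2 E) *v ((1/2) *\<^sub>R blowup_lift (P m))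
      = (2 * m) *\<^sub>R ((1/2) *\<^sub>R blowup_lift (P m))" for m
    by (simp add: matrix_vector_mult_scaleR laplacian_blowup2_lift P_def eigenproj_eigenvector
        linear_cmul[OF linear_blowup_lift])
  have twin_eig: "laplacian (blowup2 E) *v ((1/2) *\<^sub>R twin_diff u)
      = (2 * real (degree E u)) *\<^sub>R ((1/2) *\<^sub>R twin_diff u)"
    by (simp add: matrix_vector_mult_scaleR laplacian_blowup2_twin_diff)
  show ?thesis
    unfolding e0
    by (intro cmat_exp_apply_eigen_expansion eig_support_expansion(1)[OF assms(1)]
        cmat_of_mult_cvec_eigen[OF lift_eig] cmat_of_mult_cvec_eigen[OF twin_eig])
qed

lemma cpair_blowup_lift_lap_walk:
  fixes E :: "'a::finite \<Rightarrow> 'a \<Rightarrow> bool" and u :: 'a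
  assumes "simple_graph E" and "m \<in> eig_support E u"
  defines "P l \<equiv> eigenproj (laplacian E) l (std_basis u)"
  shows "cpair (blowup_lift (P m)) (lap_walk (blowup2 E) t (cbasis (0, u)))
    = exp (\<i> * complex_of_real (t * (2 * m))) * complex_of_real (P m \<bullet> P m)"
proof -
  have orth: "P m \<bullet> P l = 0" if "l \<noteq> m" for l
    using symmetric_matrix_eigenvectors_orthogonal[OF laplacian_symmetric[OF assms(1)]
        eigenproj_eigenvector eigenproj_eigenvector] that
    by (auto simp: P_def)
  have "cpair (blowup_lift (P m)) (lap_walk (blowup2 E) t (cbasis (0, u)))
      = (\<Sum>l\<in>eig_support E u. exp (\<i> * complex_of_real (t * (2 * l))) * complex_of_real (P m \<bullet> P l))"
    by (simp add: blowup2_lap_walk_expansion[OF assms(1)] P_def cpair_add cpair_smult cpair_sum cpair_cvec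
        inner_blowup_lift_twin_diff inner_blowup_lift)
  also have "\<dots> = exp (\<i> * complex_of_real (t * (2 * m))) * complex_of_real (P m \<bullet> P m)"
    using eig_support_expansion(1)[OF assms(1)] assms(2)
    by (simp add: sum.remove orth)
  finally show ?thesis .
qed

lemma cpair_twin_diff_lap_walk:
  assumes "simple_graph E"
  shows "cpair (twin_diff u) (lap_walk (blowup2 E) t (cbasis (0, u)))
    = exp (\<i> * complex_of_real (t * (2 * real (degree E u))))"
  by (simp add: blowup2_lap_walk_expansion[OF assms] cpair_add cpair_smult cpair_sum cpair_cvec
      inner_twin_diff_blowup_lift inner_twin_diff_self)

lemma blowup2_pst_phases:
  assumes "simple_graph E" and pst: "lap_walk (blowup2 E) t (cbasis (0, u)) = g *s cbasis (1, u)"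
  shows "exp (\<i> * complex_of_real (t * (2 * real (degree E u)))) = -1"
    and "\<forall>m\<in>eig_support E u. exp (\<i> * complex_of_real (t * (2 * m))) = 1"
proof -
  have phase: "exp (\<i> * complex_of_real (t * (2 * m))) = g" if m: "m \<in> eig_support E u" for m
  proof -
    let ?P = "eigenproj (laplacian E) m (std_basis u)"
    have "?P $ u = ?P \<bullet> ?P"
      using eigenproj_inner_self[of "laplacian E" m "std_basis u"] by (simp add: inner_std_basis)
    then have "cpair (blowup_lift ?P) (g *s cbasis (1, u)) = g * complex_of_real (?P \<bullet> ?P)"
      by (simp add: cpair_smult cbasis_eq_cvec cpair_cvec inner_std_basis blowup_lift_def)
    moreover have "?P \<bullet> ?P \<noteq> 0"
      using m by (simp add: eig_support_def)
    ultimately show ?thesis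
      using cpair_blowup_lift_lap_walk[OF assms(1) m, of t] pst by simp
  qed
  then have "g = 1"
    using phase[OF zero_in_eig_support] by simp
  with phase show "\<forall>m\<in>eig_support E u. exp (\<i> * complex_of_real (t * (2 * m))) = 1"
    by blast
  have "cpair (twin_diff u) (g *s cbasis (1, u)) = - g"
    by (simp add: cpair_smult cbasis_eq_cvec cpair_cvec inner_twin_diff_std_basis)
  with \<open>g = 1\<close> show "exp (\<i> * complex_of_real (t * (2 * real (degree E u)))) = -1"
    using cpair_twin_diff_lap_walk[OF assms(1), of u t] pst by simp
qed

lemma blowup2_pst_of_phases:
  assumes "simple_graph E"
    and "exp (\<i> * complex_of_real (t * (2 * real (degree E u)))) = -1"
    and "\<forall>m\<in>eig_support E u. exp (\<i> * complex_of_real (t * (2 * m))) = 1"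
  shows "lap_walk (blowup2 E) t (cbasis (0, u)) = cbasis (1, u)"
proof -
  have "std_basis (1, u) = (1/2) *\<^sub>R blowup_lift (std_basis u) - (1/2) *\<^sub>R twin_diff u"
    by (simp add: twin_diff_def blowup_lift_std_basis algebra_simps)
  then have "cbasis (1, u) = (\<Sum>m\<in>eig_support E u.
        cvec ((1/2) *\<^sub>R blowup_lift (eigenproj (laplacian E) m (std_basis u))))
      - cvec ((1/2) *\<^sub>R twin_diff u)"
    by (simp add: cbasis_eq_cvec blowup_lift_std_basis_expansion[OF assms(1)] cvec_diff cvec_sum
        scaleR_sum_right)
  with assms show ?thesis
    by (simp add: blowup2_lap_walk_expansion)
qed

lemma blowup2_pst_iff_phases:
  assumes "simple_graph E"
  shows "lap_pst (blowup2 E) (0, u) (1, u) \<longleftrightarrow>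
    (\<exists>t>0. exp (\<i> * complex_of_real (t * (2 * real (degree E u)))) = -1
       \<and> (\<forall>m\<in>eig_support E u. exp (\<i> * complex_of_real (t * (2 * m))) = 1))"
  unfolding lap_pst_def
proof safe
  fix t g
  assume "t > 0" and "lap_walk (blowup2 E) t (cbasis (0, u)) = g *s cbasis (1, u)"
  then show "\<exists>t>0. exp (\<i> * complex_of_real (t * (2 * real (degree E u)))) = -1
       \<and> (\<forall>m\<in>eig_support E u. exp (\<i> * complex_of_real (t * (2 * m))) = 1)"
    using blowup2_pst_phases[OF assms] by blast
next
  fix t
  assume "t > 0" and "exp (\<i> * complex_of_real (t * (2 * real (degree E u)))) = -1"
    and "\<forall>m\<in>eig_support E u. exp (\<i> * complex_of_real (t * (2 * m))) = 1"
  then have "lap_walk (blowup2 E) t (cbasis (0, u)) = 1 *s cbasis (1, u)"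
    using blowup2_pst_of_phases[OF assms] by simp
  with \<open>t > 0\<close> show "\<exists>t>0. \<exists>g. lap_walk (blowup2 E) t (cbasis (0, u)) = g *s cbasis (1, u)"
    by blast
qed

lemma exp_ii_eq_one_iff: "exp (\<i> * complex_of_real x) = 1 \<longleftrightarrow> (\<exists>n::int. x = 2 * of_int n * pi)"
  by (simp add: exp_eq_1)

lemma exp_ii_eq_minus_one_iff:
  "exp (\<i> * complex_of_real x) = -1 \<longleftrightarrow> (\<exists>n::int. x = (2 * of_int n + 1) * pi)"
proof -
  have "exp (\<i> * complex_of_real x) = - exp (\<i> * complex_of_real (x - pi))"
    by (simp add: right_diff_distrib exp_diff)
  then have "exp (\<i> * complex_of_real x) = -1 \<longleftrightarrow> exp (\<i> * complex_of_real (x - pi)) = 1"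
    by (metis minus_equation_iff)
  also have "\<dots> \<longleftrightarrow> (\<exists>n::int. x - pi = 2 * of_int n * pi)"
    by (rule exp_ii_eq_one_iff)
  also have "\<dots> \<longleftrightarrow> (\<exists>n::int. x = (2 * of_int n + 1) * pi)"
    by (simp add: algebra_simps)
  finally show ?thesis .
qed

lemma even_int_of_phases:
  fixes d :: nat and m t :: real
  assumes "exp (\<i> * complex_of_real (t * (2 * real d))) = -1"
    and "exp (\<i> * complex_of_real (t * (2 * m))) = 1"
    and rat_int: "m \<in> \<rat> \<Longrightarrow> m \<in> \<int>"
  shows "\<exists>k::int. m = 2 * of_int k"
proof -
  obtain j :: int where j: "t * (2 * real d) = (2 * of_int j + 1) * pi"
    using assms(1) exp_ii_eq_minus_one_iff by blast
  obtain n :: int where n: "t * (2 * m) = 2 * of_int n * pi"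
    using assms(2) exp_ii_eq_one_iff by blast
  have "m * (2 * of_int j + 1) * pi = real d * (t * (2 * m))"
    using j by (simp add: algebra_simps)
  then have m: "m * (2 * of_int j + 1) = 2 * real d * of_int n"
    using n by simp
  have "real_of_int (2 * j + 1) \<noteq> 0"
    by (simp only: of_int_eq_0_iff) presburger
  then have "m = 2 * real d * of_int n / (2 * of_int j + 1)"
    using m by (simp add: eq_divide_eq)
  then have "m \<in> \<rat>"
    by (simp add: Rats_divide Rats_mult Rats_add)
  then obtain r :: int where r: "m = of_int r"
    using rat_int Ints_cases by blast
  then have "real_of_int (r * (2 * j + 1)) = real_of_int (2 * int d * n)"
    using m by simp
  then have "r * (2 * j + 1) = 2 * int d * n"
    by (simp only: of_int_eq_iff)
  then have "even (r * (2 * j + 1))"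
    by simp
  then have "even r"
    by simp
  then show ?thesis
    using r by auto
qed

lemma exp_ii_half_pi_odd:
  assumes "odd d"
  shows "exp (\<i> * complex_of_real (pi / 2 * (2 * real d))) = -1"
proof -
  obtain j where "d = 2 * j + 1"
    using assms oddE by blast
  then show ?thesis
    by (subst exp_ii_eq_minus_one_iff) (auto intro: exI[of _ "int j"])
qed

lemma exp_ii_half_pi_even:
  assumes "m = 2 * of_int k"
  shows "exp (\<i> * complex_of_real (pi / 2 * (2 * m))) = 1"
proof -
  have "pi / 2 * (2 * m) = 2 * of_int k * pi"
    using assms by simp
  then show ?thesis
    by (subst exp_ii_eq_one_iff) blast
qed

lemma phases_iff_even_ints:
  fixes d :: nat and S :: "real set"
  assumes "odd d" and "\<And>m. m \<in> S \<Longrightarrow> m \<in> \<rat> \<Longrightarrow> m \<in> \<int>"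
  shows "(\<exists>t>0. exp (\<i> * complex_of_real (t * (2 * real d))) = -1
            \<and> (\<forall>m\<in>S. exp (\<i> * complex_of_real (t * (2 * m))) = 1))
    \<longleftrightarrow> (\<forall>m\<in>S. \<exists>k::int. m = 2 * of_int k)"
proof
  assume "\<exists>t>0. exp (\<i> * complex_of_real (t * (2 * real d))) = -1
            \<and> (\<forall>m\<in>S. exp (\<i> * complex_of_real (t * (2 * m))) = 1)"
  then show "\<forall>m\<in>S. \<exists>k::int. m = 2 * of_int k"
    using even_int_of_phases assms(2) by blast
next
  assume "\<forall>m\<in>S. \<exists>k::int. m = 2 * of_int k"
  then have "\<forall>m\<in>S. exp (\<i> * complex_of_real (pi / 2 * (2 * m))) = 1"
    using exp_ii_half_pi_even by blast
  moreover have "pi / 2 > 0"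
    by simp
  ultimately show "\<exists>t>0. exp (\<i> * complex_of_real (t * (2 * real d))) = -1
            \<and> (\<forall>m\<in>S. exp (\<i> * complex_of_real (t * (2 * m))) = 1)"
    using exp_ii_half_pi_odd[OF assms(1)] by blast
qed

theorem corollary4:
  fixes E :: "'a::finite \<Rightarrow> 'a \<Rightarrow> bool" and u :: 'a
  assumes "simple_graph E"
    and "odd (degree E u)"
  shows "lap_pst (blowup2 E) (0, u) (1, u) \<longleftrightarrow>
         (\<forall>lam\<in>eig_support E u. \<exists>k::int. lam = 2 * of_int k)"
proof -
  have "m \<in> \<int>" if m: "m \<in> eig_support E u" and "m \<in> \<rat>" for m
  proof (rule int_matrix_rational_eigenvalue_is_int[OF _ _ \<open>m \<in> \<rat>\<close>])
    show "map_matrix of_int (\<chi> i j. (if i = j then int (degree E i) else 0) - (if E i j then 1 else 0))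
        *v eigenproj (laplacian E) m (std_basis u) = m *\<^sub>R eigenproj (laplacian E) m (std_basis u)"
      unfolding laplacian_eq_map_matrix_of_int[symmetric] by (rule eigenproj_eigenvector)
    show "eigenproj (laplacian E) m (std_basis u) \<noteq> 0"
      using m by (simp add: eig_support_def)
  qed
  then show ?thesis
    unfolding blowup2_pst_iff_phases[OF assms(1)] by (rule phases_iff_even_ints[OF assms(2)])
qed

end
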